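(* Let $p$ be a prime and $G$ a finite $p$-group. Then $\mathfrak{p}_{H,p}=\mathfrak{p}_{K,p}$ for all $H,K\le G$. For a prime $q\ne p$ and $H,K\le G$, $\mathfrak{p}_{H,q}=\mathfrak{p}_{K,q}$ if and only if $H$ and $K$ are conjugate in $G$.
   Context: $A(H)$ is the Burnside ring of a finite group $H$; for $I\le H$ and $r$ a prime, $\varphi^I_{H,r}\colon A(H)\to\mathbb{Z}/r\mathbb{Z}$ is the ring map $X\mapsto|X^I|\bmod r$. The Burnside $G$-Tambara functor $\underline{A}_G$ has $\underline{A}_G(G/L)=A(L)$ (with restrictions, transfers $K\times_L-$, norms $\mathrm{Map}_L(K,-)$ and conjugations). For $K\le G$ and $r$ prime, $\mathfrak{p}_{K,r}$ is the ideal with $\mathfrak{p}_{K,r}(G/L)=\bigcap_{I\le L,\ I\preccurlyeq_GK}\ker(\varphi^I_{L,r})$, where $I\preccurlyeq_GK$ means $I$ is conjugate in $G$ to a subgroup of $K$. *)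

theory Defs
  imports "HOL-Algebra.Group_Action" "HOL-Computational_Algebra.Primes"
begin

text \<open>Finite L-sets: every finite L-set is isomorphic to one whose underlying set
is a finite subset of nat; an L-set is a pair (S, act) with act a group action
of L on S (HOL-Algebra group_action, i.e. a hom L -> BijGroup S).\<close>

type_synonym 'a gset = "nat set \<times> ('a \<Rightarrow> nat \<Rightarrow> nat)"

definition fin_gset :: "('a, 'b) monoid_scheme \<Rightarrow> 'a gset \<Rightarrow> bool" where
  "fin_gset L X \<longleftrightarrow> finite (fst X) \<and> group_action L (fst X) (snd X)"

definition gset_iso :: "('a, 'b) monoid_scheme \<Rightarrow> 'a gset \<Rightarrow> 'a gset \<Rightarrow> bool" where
  "gset_iso L X Y \<longleftrightarrow> (\<exists>f. bij_betw f (fst X) (fst Y) \<and>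
     (\<forall>g\<in>carrier L. \<forall>x\<in>fst X. f (snd X g x) = snd Y g (f x)))"

definition gset_plus :: "'a gset \<Rightarrow> 'a gset \<Rightarrow> 'a gset" where
  "gset_plus X Y =
     ((\<lambda>n. 2 * n) ` fst X \<union> (\<lambda>n. 2 * n + 1) ` fst Y,
      \<lambda>g m. if even m \<and> m div 2 \<in> fst X then 2 * snd X g (m div 2)
            else if odd m \<and> m div 2 \<in> fst Y then 2 * snd Y g (m div 2) + 1
            else undefined)"

text \<open>Grothendieck construction: a pair (X, Y) represents [X] - [Y];
(X, Y) ~ (X', Y') iff X + Y' is isomorphic to X' + Y.\<close>
definition burnside_rel :: "('a, 'b) monoid_scheme \<Rightarrow> ('a gset \<times> 'a gset) rel" where
  "burnside_rel L = {((X, Y), (X', Y')). fin_gset L X \<and> fin_gset L Y \<and>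
      fin_gset L X' \<and> fin_gset L Y' \<and> gset_iso L (gset_plus X Y') (gset_plus X' Y)}"

definition burnside_ring :: "('a, 'b) monoid_scheme \<Rightarrow> ('a gset \<times> 'a gset) set set" where
  "burnside_ring L = {(X, Y). fin_gset L X \<and> fin_gset L Y} // burnside_rel L"

definition fixcard :: "'a set \<Rightarrow> 'a gset \<Rightarrow> nat" where
  "fixcard I X = card {x \<in> fst X. \<forall>g\<in>I. snd X g x = x}"

text \<open>phi^I_{L,r} : A(L) -> Z/rZ, X |-> |X^I| mod r (Z/rZ represented by {0..<r}),
computed on a representative of the class.\<close>
definition phi :: "'a set \<Rightarrow> nat \<Rightarrow> ('a gset \<times> 'a gset) set \<Rightarrow> int" where
  "phi I r c = (let (X, Y) = (SOME z. z \<in> c) in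
                 (int (fixcard I X) - int (fixcard I Y)) mod int r)"

definition subconj :: "('a, 'b) monoid_scheme \<Rightarrow> 'a set \<Rightarrow> 'a set \<Rightarrow> bool" where
  "subconj G I K \<longleftrightarrow> (\<exists>g\<in>carrier G. (\<lambda>h. g \<otimes>\<^bsub>G\<^esub> h \<otimes>\<^bsub>G\<^esub> inv\<^bsub>G\<^esub> g) ` I \<subseteq> K)"

definition conjugate :: "('a, 'b) monoid_scheme \<Rightarrow> 'a set \<Rightarrow> 'a set \<Rightarrow> bool" where
  "conjugate G H K \<longleftrightarrow> (\<exists>g\<in>carrier G. (\<lambda>h. g \<otimes>\<^bsub>G\<^esub> h \<otimes>\<^bsub>G\<^esub> inv\<^bsub>G\<^esub> g) ` H = K)"

text \<open>The ideal p_{K,r} of the Burnside Tambara functor: its value at G/L is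
the intersection of the kernels of phi^I_{L,r} over subgroups I of L with I
subconjugate in G to K.\<close>
definition p_ideal :: "('a, 'b) monoid_scheme \<Rightarrow> 'a set \<Rightarrow> nat \<Rightarrow> 'a set
    \<Rightarrow> ('a gset \<times> 'a gset) set set" where
  "p_ideal G K r L = (if subgroup L G then
     {c \<in> burnside_ring (G\<lparr>carrier := L\<rparr>). \<forall>I. subgroup I G \<and> I \<subseteq> L \<and> subconj G I K
        \<longrightarrow> phi I r c = 0}
   else {})"

end

(*
  If G is a p-group, every subgroup I of G is a p-group, so |X^I| = |X| (mod p) for every
  finite L-set X, the non-trivial I-orbits having p-power length. Hence all marks
  phi^I_{L,p} agree with phi^1_{L,p}, and p_{K,p}(G/L) is the kernel of phi^1_{L,p}
  whatever K is.

  For a prime q other than p, conjugate subgroups are subconjugate to the same subgroups and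
  so give the same ideal. Conversely, suppose K is not subconjugate to H, and let K act by
  right translation on the set V of functions f : K -> Z/q with sum 0. For a proper subgroup
  I of K there is an I-invariant d : K -> Z/q with sum 0 and d(1) = 1, and f |-> f + t d is a
  free action of Z/q on V^I, so q divides |V^I|; as q does not divide |K|, V^K contains only
  the zero function. Thus [V] lies in p_{H,q}(G/K) but not in p_{K,q}(G/K). Finally,
  subgroups of a finite group that are subconjugate to each other are conjugate.
*)

theory Submission
  imports Defs "HOL-Library.Countable_Set"
begin

section \<open>Marks of elements of the Burnside ring\<close>

definition gset_closed :: "'a set \<Rightarrow> 'a gset \<Rightarrow> bool" where
  "gset_closed I X \<longleftrightarrow> (\<forall>g\<in>I. \<forall>x\<in>fst X. snd X g x \<in> fst X)"

lemma fin_gset_closed: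
  assumes "fin_gset L X" shows "gset_closed (carrier L) X"
proof -
  interpret group_action L "fst X" "snd X" using assms by (simp add: fin_gset_def)
  show ?thesis unfolding gset_closed_def using element_image by blast
qed

lemma gset_closed_plus:
  "gset_closed I X \<Longrightarrow> gset_closed I Y \<Longrightarrow> gset_closed I (gset_plus X Y)"
  unfolding gset_closed_def gset_plus_def by auto

lemma fixcard_gset_plus:
  assumes "finite (fst X)" "finite (fst Y)"
  shows "fixcard I (gset_plus X Y) = fixcard I X + fixcard I Y"
proof -
  let ?FX = "{x \<in> fst X. \<forall>g\<in>I. snd X g x = x}"
  let ?FY = "{y \<in> fst Y. \<forall>g\<in>I. snd Y g y = y}"
  have carrier: "fst (gset_plus X Y) = (\<lambda>n. 2 * n) ` fst X \<union> (\<lambda>n. 2 * n + 1) ` fst Y"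
    by (simp add: gset_plus_def)
  have left: "snd (gset_plus X Y) g (2 * n) = 2 * snd X g n" if "n \<in> fst X" for g n
    using that by (simp add: gset_plus_def)
  have right: "snd (gset_plus X Y) g (Suc (2 * n)) = Suc (2 * snd Y g n)" if "n \<in> fst Y" for g n
    using that by (simp add: gset_plus_def)
  have "{z \<in> fst (gset_plus X Y). \<forall>g\<in>I. snd (gset_plus X Y) g z = z}
      = (\<lambda>n. 2 * n) ` ?FX \<union> (\<lambda>n. 2 * n + 1) ` ?FY"
    unfolding carrier by (auto simp: left right)
  moreover have "card ((\<lambda>n. 2 * n) ` ?FX \<union> (\<lambda>n. 2 * n + 1) ` ?FY) = card ?FX + card ?FY"
    using assms by (subst card_Un_disjoint) (auto simp: card_image inj_on_def, presburger)
  ultimately show ?thesis unfolding fixcard_def by simp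
qed

lemma gset_iso_fixcard:
  assumes "gset_iso L X Y" "gset_closed I X" "I \<subseteq> carrier L"
  shows "fixcard I X = fixcard I Y"
proof -
  obtain f where f: "bij_betw f (fst X) (fst Y)"
    and equiv: "\<And>g x. g \<in> carrier L \<Longrightarrow> x \<in> fst X \<Longrightarrow> f (snd X g x) = snd Y g (f x)"
    using assms(1) unfolding gset_iso_def by blast
  have inj: "inj_on f (fst X)" and onto: "f ` fst X = fst Y"
    using f by (auto simp: bij_betw_def)
  have fixed_iff: "(\<forall>g\<in>I. snd Y g (f x) = f x) \<longleftrightarrow> (\<forall>g\<in>I. snd X g x = x)"
    if "x \<in> fst X" for x
    using that assms(2,3) equiv inj_onD[OF inj] unfolding gset_closed_def by (metis subsetD)
  have "{y \<in> fst Y. \<forall>g\<in>I. snd Y g y = y} = f ` {x \<in> fst X. \<forall>g\<in>I. snd X g x = x}"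
    using fixed_iff unfolding onto[symmetric] by auto
  moreover have "inj_on f {x \<in> fst X. \<forall>g\<in>I. snd X g x = x}"
    using inj by (rule inj_on_subset) auto
  ultimately show ?thesis unfolding fixcard_def by (simp add: card_image)
qed

lemma phi_burnside_class:
  assumes "fin_gset L X\<^sub>0" "fin_gset L Y\<^sub>0" "I \<subseteq> carrier L"
  shows "phi I r (burnside_rel L `` {(X\<^sub>0, Y\<^sub>0)}) =
           (int (fixcard I X\<^sub>0) - int (fixcard I Y\<^sub>0)) mod int r"
proof -
  let ?c = "burnside_rel L `` {(X\<^sub>0, Y\<^sub>0)}"
  have "(X\<^sub>0, Y\<^sub>0) \<in> ?c"
    using assms by (simp add: burnside_rel_def gset_iso_def exI[of _ id])
  then have "(SOME z. z \<in> ?c) \<in> ?c" by (rule someI)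
  then obtain X Y where XY: "(SOME z. z \<in> ?c) = (X, Y)" "(X, Y) \<in> ?c"
    by (metis surj_pair)
  then have X: "fin_gset L X" and Y: "fin_gset L Y"
    and iso: "gset_iso L (gset_plus X\<^sub>0 Y) (gset_plus X Y\<^sub>0)"
    unfolding burnside_rel_def by auto
  have closed: "gset_closed I (gset_plus X\<^sub>0 Y)"
    using gset_closed_plus[OF fin_gset_closed[OF assms(1)] fin_gset_closed[OF Y]] assms(3)
    unfolding gset_closed_def by blast
  have "fixcard I X\<^sub>0 + fixcard I Y = fixcard I X + fixcard I Y\<^sub>0"
    using gset_iso_fixcard[OF iso closed assms(3)] assms(1,2) X Y
    by (simp add: fixcard_gset_plus fin_gset_def)
  then have "int (fixcard I X) - int (fixcard I Y) = int (fixcard I X\<^sub>0) - int (fixcard I Y\<^sub>0)"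
    by linarith
  then show ?thesis unfolding phi_def XY(1) by simp
qed

section \<open>Fixed points of p-group actions\<close>

lemma (in group_action) orbit_eq_singleton_iff:
  assumes "x \<in> E"
  shows "orbit G \<phi> x = {x} \<longleftrightarrow> (\<forall>g\<in>carrier G. \<phi> g x = x)"
proof -
  have one: "\<one>\<^bsub>G\<^esub> \<in> carrier G"
    using group_hom group_hom.axioms(1) group.is_monoid monoid.one_closed by blast
  show ?thesis
  proof
    assume "orbit G \<phi> x = {x}"
    then show "\<forall>g\<in>carrier G. \<phi> g x = x" unfolding orbit_def by blast
  next
    assume "\<forall>g\<in>carrier G. \<phi> g x = x"
    then show "orbit G \<phi> x = {x}"
      using one unfolding orbit_def by (auto intro!: exI[of _ "\<one>\<^bsub>G\<^esub>"])
  qed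
qed

lemma (in group_action) prime_dvd_card_orbit:
  assumes "prime p" "card (carrier G) = p ^ k" "x \<in> E" "orbit G \<phi> x \<noteq> {x}"
  shows "p dvd card (orbit G \<phi> x)"
proof -
  have "card (orbit G \<phi> x) dvd p ^ k"
    using orbit_stabilizer_theorem[OF assms(3)] assms(2) unfolding order_def by (metis dvd_triv_left)
  then obtain j where j: "card (orbit G \<phi> x) = p ^ j"
    using assms(1) divides_primepow_nat by blast
  have "x \<in> orbit G \<phi> x" using orbit_refl[OF assms(3)] .
  moreover have "finite (orbit G \<phi> x)"
    using j assms(1) card.infinite by (metis not_prime_0 power_eq_0_iff)
  ultimately have "card (orbit G \<phi> x) \<noteq> 1"
    using assms(4) by (metis card_1_singletonE singletonD)
  then show ?thesis using j by (metis dvd_power not_gr0 power_0)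
qed

lemma (in group_action) card_fixed_points_mod_prime:
  assumes finE: "finite E" and p: "prime p" and card: "card (carrier G) = p ^ k"
  shows "card {x \<in> E. \<forall>g\<in>carrier G. \<phi> g x = x} mod p = card E mod p"
proof -
  let ?F = "{x \<in> E. \<forall>g\<in>carrier G. \<phi> g x = x}"
  let ?moved = "\<lambda>x. if x \<in> ?F then 0 else 1::nat"
  have "p dvd (\<Sum>x\<in>orb. ?moved x)" if orb: "orb \<in> orbits G E \<phi>" for orb
  proof -
    obtain y where y: "y \<in> E" "orb = orbit G \<phi> y"
      using orb unfolding orbits_def by blast
    show ?thesis
    proof (cases "y \<in> ?F")
      case True
      then have "orb = {y}" using y orbit_eq_singleton_iff[OF y(1)] by simp
      then show ?thesis using True by simp
    next
      case False
      have "x \<notin> ?F" if x: "x \<in> orb" for x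
      proof
        assume fixed: "x \<in> ?F"
        then have "x \<in> E" "orbit G \<phi> x = {x}"
          using orbit_eq_singleton_iff[of x] by auto
        moreover have "y \<in> orbit G \<phi> x"
          using orbit_sym[of y x] x y \<open>x \<in> E\<close> by simp
        ultimately show False using False fixed by simp
      qed
      then have "(\<Sum>x\<in>orb. ?moved x) = (\<Sum>x\<in>orb. 1)"
        by (intro sum.cong) auto
      moreover have "orbit G \<phi> y \<noteq> {y}"
        using False y(1) orbit_eq_singleton_iff[OF y(1)] by blast
      ultimately show ?thesis
        using prime_dvd_card_orbit[OF p card y(1)] y(2) by simp
    qed
  qed
  then have "p dvd (\<Sum>orb\<in>orbits G E \<phi>. \<Sum>x\<in>orb. ?moved x)"
    by (rule dvd_sum)
  moreover have "(\<Sum>orb\<in>orbits G E \<phi>. \<Sum>x\<in>orb. ?moved x) = card (E - ?F)"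
    using finE by (simp add: disjoint_sum sum.If_cases Diff_eq, intro arg_cong[where f = card]) auto
  moreover have "card E = card ?F + card (E - ?F)"
    using finE card_Diff_subset[of ?F E] card_mono[OF finE, of ?F] by (auto simp: finite_subset)
  ultimately show ?thesis by (auto elim!: dvdE)
qed

lemma (in group) card_subgroup_prime_power:
  assumes "prime p" "card (carrier G) = p ^ n" "subgroup I G"
  shows "\<exists>k. card I = p ^ k"
proof -
  have "card I dvd p ^ n"
    using lagrange[OF assms(3)] assms(2) unfolding order_def by (metis dvd_triv_right)
  then show ?thesis using assms(1) divides_primepow_nat by blast
qed

lemma (in group) fixcard_mod_prime:
  assumes p: "prime p" and I: "subgroup I G" "card I = p ^ k"
    and L: "subgroup L G" "I \<subseteq> L" and X: "fin_gset (G\<lparr>carrier := L\<rparr>) X"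
  shows "fixcard I X mod p = card (fst X) mod p"
proof -
  interpret X: group_action "G\<lparr>carrier := L\<rparr>" "fst X" "snd X"
    using X by (simp add: fin_gset_def)
  have "group_action (G\<lparr>carrier := I\<rparr>) (fst X) (snd X)"
    using X.induced_action[OF subgroup_incl[OF I(1) L]] by simp
  from group_action.card_fixed_points_mod_prime[OF this _ p, of k] show ?thesis
    using X I(2) by (simp add: fixcard_def fin_gset_def)
qed

lemma (in group) phi_prime_eq_phi_one:
  assumes p: "prime p" and L: "subgroup L G" and c: "c \<in> burnside_ring (G\<lparr>carrier := L\<rparr>)"
    and I: "subgroup I G" "card I = p ^ k" "I \<subseteq> L"
  shows "phi I p c = phi {\<one>} p c"
proof -
  obtain X Y where X: "fin_gset (G\<lparr>carrier := L\<rparr>) X" and Y: "fin_gset (G\<lparr>carrier := L\<rparr>) Y"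
    and c_eq: "c = burnside_rel (G\<lparr>carrier := L\<rparr>) `` {(X, Y)}"
    using c unfolding burnside_ring_def by (auto elim!: quotientE)
  have phi_eq: "phi J p c = (int (card (fst X)) - int (card (fst Y))) mod int p"
    if J: "subgroup J G" "card J = p ^ j" "J \<subseteq> L" for J j
  proof -
    have "int (fixcard J X) mod int p = int (card (fst X)) mod int p"
      "int (fixcard J Y) mod int p = int (card (fst Y)) mod int p"
      using fixcard_mod_prime[OF p J(1,2) L J(3)] X Y by (metis of_nat_mod)+
    then have "(int (fixcard J X) - int (fixcard J Y)) mod int p
        = (int (card (fst X)) - int (card (fst Y))) mod int p"
      by (rule mod_diff_cong)
    then show ?thesis
      using phi_burnside_class[OF X Y, of J p] c_eq J(3) by simp
  qed
  show ?thesis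
    using phi_eq[OF I] phi_eq[OF triv_subgroup, of 0] subgroup.one_closed[OF L] by simp
qed

lemma (in group) subconj_one: "subgroup H G \<Longrightarrow> subconj G {\<one>} H"
  unfolding subconj_def by (auto intro!: bexI[of _ \<one>] subgroup.one_closed)

lemma (in group) p_ideal_prime_power_order:
  assumes p: "prime p" "card (carrier G) = p ^ n" and H: "subgroup H G"
  shows "p_ideal G H p L = (if subgroup L G
           then {c \<in> burnside_ring (G\<lparr>carrier := L\<rparr>). phi {\<one>} p c = 0} else {})"
proof (cases "subgroup L G")
  case True
  have "phi I p c = 0"
    if "phi {\<one>} p c = 0" "c \<in> burnside_ring (G\<lparr>carrier := L\<rparr>)" "subgroup I G" "I \<subseteq> L"
    for c I
    using that phi_prime_eq_phi_one[OF p(1) True] card_subgroup_prime_power[OF p] by metis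
  moreover have "{\<one>} \<subseteq> L" using subgroup.one_closed[OF True] by simp
  ultimately show ?thesis
    using True triv_subgroup subconj_one[OF H] unfolding p_ideal_def by auto
next
  case False
  then show ?thesis by (simp add: p_ideal_def)
qed

section \<open>Finite actions as L-sets\<close>

lemma group_actionI:
  assumes grp: "group L"
    and closed: "\<And>g. g \<in> carrier L \<Longrightarrow> act g \<in> E \<rightarrow>\<^sub>E E"
    and mult: "\<And>g h x. g \<in> carrier L \<Longrightarrow> h \<in> carrier L \<Longrightarrow> x \<in> E \<Longrightarrow>
                 act (g \<otimes>\<^bsub>L\<^esub> h) x = act g (act h x)"
    and one: "\<And>x. x \<in> E \<Longrightarrow> act \<one>\<^bsub>L\<^esub> x = x"
  shows "group_action L E act"
proof -
  interpret L: group L by (rule grp)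
  have Bij: "act g \<in> Bij E" if g: "g \<in> carrier L" for g
  proof -
    have inverse: "act (inv\<^bsub>L\<^esub> h) (act h x) = x" if "h \<in> carrier L" "x \<in> E" for h x
      using that mult[symmetric] one by simp
    have "bij_betw (act g) E E"
    proof (rule bij_betw_byWitness[where f' = "act (inv\<^bsub>L\<^esub> g)"])
      show "\<forall>x\<in>E. act (inv\<^bsub>L\<^esub> g) (act g x) = x" using inverse g by blast
      show "\<forall>x\<in>E. act g (act (inv\<^bsub>L\<^esub> g) x) = x" using inverse[of "inv\<^bsub>L\<^esub> g"] g by simp
      show "act g ` E \<subseteq> E" "act (inv\<^bsub>L\<^esub> g) ` E \<subseteq> E" using closed g by auto
    qed
    then show ?thesis using closed[OF g] by (simp add: Bij_def PiE_def)
  qed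
  have "act (g \<otimes>\<^bsub>L\<^esub> h) = act g \<otimes>\<^bsub>BijGroup E\<^esub> act h"
    if gh: "g \<in> carrier L" "h \<in> carrier L" for g h
  proof -
    have "act (g \<otimes>\<^bsub>L\<^esub> h) = compose E (act g) (act h)"
    proof
      fix x show "act (g \<otimes>\<^bsub>L\<^esub> h) x = compose E (act g) (act h) x"
        using closed[of "g \<otimes>\<^bsub>L\<^esub> h"] mult[OF gh] gh
        by (cases "x \<in> E") (auto simp: compose_def PiE_def extensional_def)
    qed
    then show ?thesis using Bij gh by (simp add: BijGroup_def)
  qed
  then have "act \<in> hom L (BijGroup E)"
    using Bij by (auto intro!: homI simp: BijGroup_def)
  then show ?thesis
    using grp group_BijGroup by (simp add: group_action_def group_hom_def group_hom_axioms_def)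
qed

definition gset_of :: "'c set \<Rightarrow> ('a \<Rightarrow> 'c \<Rightarrow> 'c) \<Rightarrow> 'a gset" where
  "gset_of F act = (to_nat_on F ` F,
     \<lambda>g. \<lambda>n \<in> to_nat_on F ` F. to_nat_on F (act g (from_nat_into F n)))"

lemma gset_of_act:
  "finite F \<Longrightarrow> f \<in> F \<Longrightarrow> snd (gset_of F act) g (to_nat_on F f) = to_nat_on F (act g f)"
  by (simp add: gset_of_def countable_finite)

lemma fixcard_gset_of:
  assumes fin: "finite F" and closed: "\<And>g f. g \<in> I \<Longrightarrow> f \<in> F \<Longrightarrow> act g f \<in> F"
  shows "fixcard I (gset_of F act) = card {f \<in> F. \<forall>g\<in>I. act g f = f}"
proof -
  have inj: "inj_on (to_nat_on F) F"
    using fin by (simp add: countable_finite inj_on_to_nat_on)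
  have fixed_iff: "(\<forall>g\<in>I. snd (gset_of F act) g (to_nat_on F f) = to_nat_on F f)
      \<longleftrightarrow> (\<forall>g\<in>I. act g f = f)" if f: "f \<in> F" for f
    using gset_of_act[OF fin f, of act] inj_on_eq_iff[OF inj closed[OF _ f] f] by simp
  have "{n \<in> fst (gset_of F act). \<forall>g\<in>I. snd (gset_of F act) g n = n}
      = to_nat_on F ` {f \<in> F. \<forall>g\<in>I. act g f = f}"
    using fixed_iff unfolding gset_of_def fst_conv by auto
  moreover have "inj_on (to_nat_on F) {f \<in> F. \<forall>g\<in>I. act g f = f}"
    using inj by (rule inj_on_subset) auto
  ultimately show ?thesis unfolding fixcard_def by (simp add: card_image)
qed

lemma fin_gset_gset_of:
  assumes "group L" "finite F"
    and closed: "\<And>g f. g \<in> carrier L \<Longrightarrow> f \<in> F \<Longrightarrow> act g f \<in> F"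
    and mult: "\<And>g h f. g \<in> carrier L \<Longrightarrow> h \<in> carrier L \<Longrightarrow> f \<in> F \<Longrightarrow>
                 act (g \<otimes>\<^bsub>L\<^esub> h) f = act g (act h f)"
    and one: "\<And>f. f \<in> F \<Longrightarrow> act \<one>\<^bsub>L\<^esub> f = f"
  shows "fin_gset L (gset_of F act)"
proof -
  have "group_action L (to_nat_on F ` F) (snd (gset_of F act))"
  proof (rule group_actionI[OF assms(1)])
    show "snd (gset_of F act) g \<in> to_nat_on F ` F \<rightarrow>\<^sub>E to_nat_on F ` F" if "g \<in> carrier L" for g
      using closed[OF that] assms(2) by (auto simp: gset_of_def countable_finite)
  qed (use assms(2) closed mult one in \<open>auto simp: gset_of_def countable_finite\<close>)
  then show ?thesis using assms(2) by (simp add: fin_gset_def gset_of_def)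
qed

definition empty_gset :: "'a gset" where
  "empty_gset = ({}, \<lambda>_ _. undefined)"

lemma fin_gset_empty_gset: "group L \<Longrightarrow> fin_gset L empty_gset"
  unfolding fin_gset_def empty_gset_def by (auto intro: group_actionI)

lemma fixcard_empty_gset: "fixcard I empty_gset = 0"
  by (simp add: fixcard_def empty_gset_def)

section \<open>Zero-sum functions on a group\<close>

text \<open>Adding multiples of \<open>d\<close> is a free action of \<open>\<int>/q\<close> on \<open>S\<close>, and the functions
  vanishing at \<open>x\<^sub>0\<close> form a set of orbit representatives.\<close>

lemma dvd_card_if_shift_closed:
  fixes S :: "('a \<Rightarrow> nat) set" and d :: "'a \<Rightarrow> nat"
  assumes S: "S \<subseteq> D \<rightarrow>\<^sub>E {..<q}" and x\<^sub>0: "x\<^sub>0 \<in> D" "d x\<^sub>0 = 1"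
    and shift_closed: "\<And>t f. f \<in> S \<Longrightarrow> (\<lambda>x\<in>D. (f x + t * d x) mod q) \<in> S"
  shows "q dvd card S"
proof -
  define shift where "shift t f = (\<lambda>x\<in>D. (f x + t * d x) mod q)" for t f
  define S\<^sub>0 where "S\<^sub>0 = {f \<in> S. f x\<^sub>0 = 0}"
  have bounded: "f x < q" if "f \<in> S" "x \<in> D" for f x
    using S that by auto
  have shift_shift: "shift t (shift s f) = f" if f: "f \<in> S" and st: "q dvd s + t" for s t f
  proof
    fix x show "shift t (shift s f) x = f x"
    proof (cases "x \<in> D")
      case True
      have "shift t (shift s f) x = (f x + (s + t) * d x) mod q"
        using True by (simp add: shift_def mod_add_left_eq distrib_right add.assoc)
      also have "\<dots> = f x"
        using st bounded[OF f True] by (auto elim!: dvdE simp: mult.assoc)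
      finally show ?thesis .
    next
      case False
      then show ?thesis using f S by (auto simp: shift_def PiE_def extensional_def)
    qed
  qed
  have shift_x\<^sub>0: "shift t f x\<^sub>0 = (f x\<^sub>0 + t) mod q" for t f
    using x\<^sub>0 by (simp add: shift_def)
  have "bij_betw (\<lambda>(t, f). shift t f) ({..<q} \<times> S\<^sub>0) S"
  proof (rule bij_betw_byWitness[where f' = "\<lambda>f. (f x\<^sub>0, shift (q - f x\<^sub>0) f)"])
    show "\<forall>a\<in>{..<q} \<times> S\<^sub>0.
        (\<lambda>f. (f x\<^sub>0, shift (q - f x\<^sub>0) f)) ((\<lambda>(t, f). shift t f) a) = a"
      using shift_x\<^sub>0 shift_shift by (auto simp: S\<^sub>0_def)
    show "\<forall>f\<in>S. (\<lambda>(t, f). shift t f) ((\<lambda>f. (f x\<^sub>0, shift (q - f x\<^sub>0) f)) f) = f"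
    proof
      fix f assume f: "f \<in> S"
      then have "q dvd (q - f x\<^sub>0) + f x\<^sub>0" using bounded[OF f x\<^sub>0(1)] by simp
      then show "(\<lambda>(t, f). shift t f) ((\<lambda>f. (f x\<^sub>0, shift (q - f x\<^sub>0) f)) f) = f"
        using shift_shift[OF f] by simp
    qed
    show "(\<lambda>(t, f). shift t f) ` ({..<q} \<times> S\<^sub>0) \<subseteq> S"
      using shift_closed by (auto simp: S\<^sub>0_def shift_def)
    show "(\<lambda>f. (f x\<^sub>0, shift (q - f x\<^sub>0) f)) ` S \<subseteq> {..<q} \<times> S\<^sub>0"
    proof (rule image_subsetI)
      fix f assume f: "f \<in> S"
      then have "f x\<^sub>0 < q" using bounded x\<^sub>0 by blast
      then show "(f x\<^sub>0, shift (q - f x\<^sub>0) f) \<in> {..<q} \<times> S\<^sub>0"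
        using shift_closed[OF f] shift_x\<^sub>0 by (simp add: S\<^sub>0_def shift_def)
    qed
  qed
  then have "card S = card ({..<q} \<times> S\<^sub>0)"
    by (simp add: bij_betw_same_card)
  then have "card S = q * card S\<^sub>0"
    by (simp add: card_cartesian_product)
  then show ?thesis by simp
qed

text \<open>\<open>\<int>/q\<close> is represented by \<open>{..<q}\<close>.\<close>

definition zero_sum_functions :: "('a, 'b) monoid_scheme \<Rightarrow> nat \<Rightarrow> ('a \<Rightarrow> nat) set" where
  "zero_sum_functions G q = {f \<in> carrier G \<rightarrow>\<^sub>E {..<q}. q dvd (\<Sum>x\<in>carrier G. f x)}"

definition right_translate :: "('a, 'b) monoid_scheme \<Rightarrow> 'a \<Rightarrow> ('a \<Rightarrow> nat) \<Rightarrow> 'a \<Rightarrow> nat" where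
  "right_translate G g f = (\<lambda>x \<in> carrier G. f (x \<otimes>\<^bsub>G\<^esub> g))"

definition fixed_zero_sum_functions ::
    "('a, 'b) monoid_scheme \<Rightarrow> nat \<Rightarrow> 'a set \<Rightarrow> ('a \<Rightarrow> nat) set" where
  "fixed_zero_sum_functions G q I =
     {f \<in> zero_sum_functions G q. \<forall>g\<in>I. right_translate G g f = f}"

definition zero_sum_gset :: "('a, 'b) monoid_scheme \<Rightarrow> nat \<Rightarrow> 'a gset" where
  "zero_sum_gset G q = gset_of (zero_sum_functions G q) (right_translate G)"

context group
begin

lemma right_mult_bij: "g \<in> carrier G \<Longrightarrow> bij_betw (\<lambda>x. x \<otimes> g) (carrier G) (carrier G)"
  by (rule bij_betw_byWitness[where f' = "\<lambda>x. x \<otimes> inv g"]) (auto simp: m_assoc)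

lemma right_translate_mult:
  "g \<in> carrier G \<Longrightarrow> h \<in> carrier G \<Longrightarrow>
     right_translate G (g \<otimes> h) f = right_translate G g (right_translate G h f)"
  unfolding right_translate_def by (intro restrict_ext) (simp add: m_assoc)

lemma right_translate_one: "f \<in> carrier G \<rightarrow>\<^sub>E A \<Longrightarrow> right_translate G \<one> f = f"
  unfolding right_translate_def by (auto simp: PiE_def extensional_def)

lemma right_translate_zero_sum:
  assumes "g \<in> carrier G" "f \<in> zero_sum_functions G q"
  shows "right_translate G g f \<in> zero_sum_functions G q"
proof -
  have "(\<Sum>x\<in>carrier G. f (x \<otimes> g)) = (\<Sum>x\<in>carrier G. f x)"
    using sum.reindex_bij_betw[OF right_mult_bij[OF assms(1)]] .
  then show ?thesis
    using assms by (auto simp: zero_sum_functions_def right_translate_def)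
qed

lemma finite_zero_sum_functions: "finite (carrier G) \<Longrightarrow> finite (zero_sum_functions G q)"
  unfolding zero_sum_functions_def
  by (rule finite_subset[of _ "carrier G \<rightarrow>\<^sub>E {..<q}"]) (auto intro: finite_PiE)

lemma fixed_zero_sum_functions_carrier:
  assumes q: "prime q" "\<not> q dvd card (carrier G)"
  shows "fixed_zero_sum_functions G q (carrier G) = {\<lambda>x \<in> carrier G. 0}"
proof -
  have "f = (\<lambda>x \<in> carrier G. 0)" if f: "f \<in> fixed_zero_sum_functions G q (carrier G)" for f
  proof -
    have const: "f x = f \<one>" if x: "x \<in> carrier G" for x
    proof -
      have "right_translate G x f \<one> = f \<one>"
        using f x by (simp add: fixed_zero_sum_functions_def)
      then show ?thesis using x by (simp add: right_translate_def)
    qed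
    then have "(\<Sum>x\<in>carrier G. f x) = (\<Sum>x\<in>carrier G. f \<one>)"
      by (rule sum.cong[OF refl])
    then have "(\<Sum>x\<in>carrier G. f x) = card (carrier G) * f \<one>"
      by simp
    then have "q dvd card (carrier G) * f \<one>"
      using f by (simp add: fixed_zero_sum_functions_def zero_sum_functions_def)
    moreover have "f \<one> < q"
      using f by (auto simp: fixed_zero_sum_functions_def zero_sum_functions_def)
    ultimately have "f \<one> = 0"
      using q prime_dvd_mult_iff by (metis dvd_imp_le not_less neq0_conv)
    then have "\<forall>x\<in>carrier G. f x = 0"
      using const by metis
    moreover have "f \<in> extensional (carrier G)"
      using f by (simp add: fixed_zero_sum_functions_def zero_sum_functions_def PiE_def)
    ultimately show ?thesis
      by (auto simp: extensional_def)
  qed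
  moreover have "(\<lambda>x \<in> carrier G. 0) \<in> fixed_zero_sum_functions G q (carrier G)"
    using prime_gt_0_nat[OF q(1)]
    by (auto simp: fixed_zero_sum_functions_def zero_sum_functions_def right_translate_def)
  ultimately show ?thesis by blast
qed

lemma subgroup_mult_right_mem_iff:
  assumes "subgroup I G" "x \<in> carrier G" "g \<in> I"
  shows "x \<otimes> g \<in> I \<longleftrightarrow> x \<in> I"
proof
  assume "x \<otimes> g \<in> I"
  then have "x \<otimes> g \<otimes> inv g \<in> I"
    using assms by (simp add: subgroup.m_closed subgroup.m_inv_closed)
  then show "x \<in> I"
    using assms by (simp add: m_assoc subgroup.mem_carrier)
qed (use assms in \<open>simp add: subgroup.m_closed\<close>)

lemma proper_subgroup_invariant_weight:
  assumes fin: "finite (carrier G)" and q: "q > 0" and I: "subgroup I G" "I \<noteq> carrier G"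
  obtains d :: "'a \<Rightarrow> nat" where "d \<one> = 1" "q dvd (\<Sum>x\<in>carrier G. d x)"
    "\<And>x g. x \<in> carrier G \<Longrightarrow> g \<in> I \<Longrightarrow> d (x \<otimes> g) = d x"
proof -
  have I_sub: "I \<subseteq> carrier G" using I(1) subgroup.subset by blast
  then obtain a where a: "a \<in> carrier G" "a \<notin> I" using I(2) by blast
  define d where "d x = of_bool (x \<in> I) + (q - 1) * of_bool (inv a \<otimes> x \<in> I)" for x
  have "inv a \<notin> I"
    using a I(1) by (metis inv_inv subgroup.m_inv_closed)
  then have "d \<one> = 1"
    using a I(1) by (simp add: d_def subgroup.one_closed)
  moreover have "d (x \<otimes> g) = d x" if "x \<in> carrier G" "g \<in> I" for x g
    using that a I_sub subgroup_mult_right_mem_iff[OF I(1)]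
    by (auto simp: d_def m_assoc[symmetric])
  moreover have "(\<Sum>x\<in>carrier G. d x) = q * card I"
  proof -
    have "carrier G \<inter> {x. inv a \<otimes> x \<in> I} = (\<lambda>h. a \<otimes> h) ` I"
      using a I_sub by (force simp: m_assoc[symmetric])
    moreover have "inj_on (\<lambda>h. a \<otimes> h) I"
      using a I_sub by (intro inj_onI) (auto simp: subset_iff)
    ultimately have "card (carrier G \<inter> {x. inv a \<otimes> x \<in> I}) = card I"
      by (simp add: card_image)
    moreover have "card (carrier G \<inter> {x. x \<in> I}) = card I"
      using I_sub by (simp add: Int_absorb1 Collect_mem_eq)
    moreover have "(\<Sum>x\<in>carrier G. d x) = (\<Sum>x\<in>carrier G. of_bool (x \<in> I))
        + (q - 1) * (\<Sum>x\<in>carrier G. of_bool (inv a \<otimes> x \<in> I))"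
      by (simp add: d_def sum.distrib sum_distrib_left)
    ultimately have "(\<Sum>x\<in>carrier G. d x) = card I + (q - 1) * card I"
      using fin by simp
    then show ?thesis
      using q by (cases q) auto
  qed
  ultimately show thesis using that by simp
qed

lemma dvd_card_fixed_zero_sum_functions:
  assumes fin: "finite (carrier G)" and q: "q > 0" and I: "subgroup I G" "I \<noteq> carrier G"
  shows "q dvd card (fixed_zero_sum_functions G q I)"
proof -
  obtain d where d: "d \<one> = 1" "q dvd (\<Sum>x\<in>carrier G. d x)"
    and invariant: "\<And>x g. x \<in> carrier G \<Longrightarrow> g \<in> I \<Longrightarrow> d (x \<otimes> g) = d x"
    using proper_subgroup_invariant_weight[OF fin q I] by blast
  have I_sub: "I \<subseteq> carrier G" using I(1) subgroup.subset by blast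
  show ?thesis
  proof (rule dvd_card_if_shift_closed[where D = "carrier G" and x\<^sub>0 = \<one> and d = d])
    fix t f assume f: "f \<in> fixed_zero_sum_functions G q I"
    let ?h = "\<lambda>x\<in>carrier G. (f x + t * d x) mod q"
    have "(\<Sum>x\<in>carrier G. ?h x) mod q = (\<Sum>x\<in>carrier G. f x + t * d x) mod q"
      by (simp add: mod_sum_eq)
    moreover have "q dvd (\<Sum>x\<in>carrier G. f x + t * d x)"
      using f d(2) by (simp add: sum.distrib sum_distrib_left[symmetric]
          fixed_zero_sum_functions_def zero_sum_functions_def)
    ultimately have "q dvd (\<Sum>x\<in>carrier G. ?h x)"
      by (simp add: mod_eq_0_iff_dvd[symmetric])
    moreover have "right_translate G g ?h = ?h" if g: "g \<in> I" for g
    proof -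
      have "f (x \<otimes> g) = f x" if x: "x \<in> carrier G" for x
      proof -
        have "right_translate G g f x = f x"
          using f g by (simp add: fixed_zero_sum_functions_def)
        then show ?thesis using x by (simp add: right_translate_def)
      qed
      then show ?thesis
        using g I_sub invariant unfolding right_translate_def
        by (intro restrict_ext) (auto simp: subsetD)
    qed
    ultimately show "?h \<in> fixed_zero_sum_functions G q I"
      using q by (auto simp: fixed_zero_sum_functions_def zero_sum_functions_def)
  qed (auto simp: d fixed_zero_sum_functions_def zero_sum_functions_def)
qed

lemma fin_gset_zero_sum_gset:
  assumes "finite (carrier G)" shows "fin_gset G (zero_sum_gset G q)"
  unfolding zero_sum_gset_def
proof (rule fin_gset_gset_of[OF is_group finite_zero_sum_functions[OF assms]])
  show "right_translate G \<one> f = f" if "f \<in> zero_sum_functions G q" for f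
    using that right_translate_one by (auto simp: zero_sum_functions_def)
qed (simp_all add: right_translate_zero_sum right_translate_mult)

lemma phi_zero_sum_class:
  assumes "finite (carrier G)" "I \<subseteq> carrier G"
  shows "phi I q (burnside_rel G `` {(zero_sum_gset G q, empty_gset)})
           = int (card (fixed_zero_sum_functions G q I)) mod int q"
proof -
  have "fixcard I (zero_sum_gset G q) = card (fixed_zero_sum_functions G q I)"
    unfolding zero_sum_gset_def fixed_zero_sum_functions_def
    using assms right_translate_zero_sum
    by (subst fixcard_gset_of) (auto simp: finite_zero_sum_functions)
  then show ?thesis
    using phi_burnside_class[OF fin_gset_zero_sum_gset[OF assms(1)] fin_gset_empty_gset[OF is_group]]
      assms(2) by (simp add: fixcard_empty_gset)
qed

end

section \<open>Subconjugacy and the ideals\<close>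

context group
begin

lemma subconj_refl: "K \<subseteq> carrier G \<Longrightarrow> subconj G K K"
  unfolding subconj_def by (intro bexI[of _ \<one>]) auto

lemma conjugate_imp_subconj: "conjugate G H K \<Longrightarrow> subconj G H K"
  unfolding conjugate_def subconj_def by blast

lemma subconj_trans:
  assumes I: "I \<subseteq> carrier G" and "subconj G I H" "subconj G H K"
  shows "subconj G I K"
proof -
  obtain a where a: "a \<in> carrier G" "(\<lambda>h. a \<otimes> h \<otimes> inv a) ` I \<subseteq> H"
    using assms(2) unfolding subconj_def by blast
  obtain b where b: "b \<in> carrier G" "(\<lambda>h. b \<otimes> h \<otimes> inv b) ` H \<subseteq> K"
    using assms(3) unfolding subconj_def by blast
  have "b \<otimes> a \<otimes> h \<otimes> inv (b \<otimes> a) = b \<otimes> (a \<otimes> h \<otimes> inv a) \<otimes> inv b" if "h \<in> I" for h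
    using a(1) b(1) that I by (simp add: inv_mult_group m_assoc subset_iff)
  then have "(\<lambda>h. (b \<otimes> a) \<otimes> h \<otimes> inv (b \<otimes> a)) ` I \<subseteq> K"
    using a(2) b(2) by auto
  then show ?thesis
    unfolding subconj_def using a(1) b(1) by blast
qed

lemma conjugate_sym:
  assumes H: "H \<subseteq> carrier G" and "conjugate G H K"
  shows "conjugate G K H"
proof -
  obtain g where g: "g \<in> carrier G" "(\<lambda>h. g \<otimes> h \<otimes> inv g) ` H = K"
    using assms(2) unfolding conjugate_def by blast
  have "(\<lambda>k. inv g \<otimes> k \<otimes> inv (inv g)) ` K
      = (\<lambda>h. inv g \<otimes> (g \<otimes> h \<otimes> inv g) \<otimes> inv (inv g)) ` H"
    unfolding g(2)[symmetric] image_image ..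
  also have "\<dots> = H"
  proof (rule image_cong[where g = id, simplified, OF refl])
    fix h assume "h \<in> H"
    then show "inv g \<otimes> (g \<otimes> h \<otimes> inv g) \<otimes> inv (inv g) = h"
      using g(1) H by (simp add: m_assoc[symmetric] subset_iff) (simp add: m_assoc)
  qed
  finally show ?thesis
    unfolding conjugate_def using g(1) by blast
qed

lemma subconj_antisym:
  assumes fin: "finite (carrier G)" and H: "H \<subseteq> carrier G" and K: "K \<subseteq> carrier G"
    and "subconj G K H" "subconj G H K"
  shows "conjugate G H K"
proof -
  have card_conj: "card ((\<lambda>h. g \<otimes> h \<otimes> inv g) ` A) = card A"
    if "g \<in> carrier G" "A \<subseteq> carrier G" for g A
    using that by (intro card_image inj_onI) (auto simp: subset_iff)
  obtain a where a: "a \<in> carrier G" "(\<lambda>h. a \<otimes> h \<otimes> inv a) ` K \<subseteq> H"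
    using assms(4) unfolding subconj_def by blast
  obtain b where b: "b \<in> carrier G" "(\<lambda>h. b \<otimes> h \<otimes> inv b) ` H \<subseteq> K"
    using assms(5) unfolding subconj_def by blast
  have finite: "finite H" "finite K"
    using fin H K finite_subset by auto
  have "card K \<le> card H"
    using card_mono[OF finite(1) a(2)] card_conj[OF a(1) K] by simp
  moreover have "card H \<le> card K"
    using card_mono[OF finite(2) b(2)] card_conj[OF b(1) H] by simp
  ultimately have "(\<lambda>h. b \<otimes> h \<otimes> inv b) ` H = K"
    using b(2) card_conj[OF b(1) H] finite(2) card_subset_eq by (metis le_antisym)
  then show ?thesis
    unfolding conjugate_def using b(1) by blast
qed

lemma p_ideal_conjugate_eq:
  assumes "H \<subseteq> carrier G" "conjugate G H K"
  shows "p_ideal G H r = p_ideal G K r"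
proof -
  have "subconj G I H \<longleftrightarrow> subconj G I K" if "subgroup I G" for I
    using subconj_trans[OF subgroup.subset[OF that]] conjugate_imp_subconj assms
      conjugate_sym[OF assms] by blast
  then show ?thesis
    unfolding p_ideal_def by (intro ext) auto
qed

lemma p_ideal_neq_if_not_subconj:
  assumes fin: "finite (carrier G)" and q: "prime q"
    and K: "subgroup K G" "\<not> q dvd card K" and not_subconj: "\<not> subconj G K H"
  shows "p_ideal G H q K \<noteq> p_ideal G K q K"
proof -
  let ?K = "G\<lparr>carrier := K\<rparr>"
  interpret K: group ?K using subgroup_imp_group[OF K(1)] .
  have K_sub: "K \<subseteq> carrier G" using K(1) subgroup.subset by blast
  have finK: "finite (carrier ?K)" using fin K_sub finite_subset by auto
  define c where "c = burnside_rel ?K `` {(zero_sum_gset ?K q, empty_gset)}"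
  have c: "c \<in> burnside_ring ?K"
    unfolding c_def burnside_ring_def
    using K.fin_gset_zero_sum_gset[OF finK] fin_gset_empty_gset[OF K.is_group]
    by (intro quotientI) simp
  have phi_c: "phi I q c = int (card (fixed_zero_sum_functions ?K q I)) mod int q"
    if "I \<subseteq> K" for I
    unfolding c_def using K.phi_zero_sum_class[OF finK] that by simp
  have "phi I q c = 0" if I: "subgroup I G" "I \<subseteq> K" "subconj G I H" for I
  proof -
    have "I \<noteq> K" using not_subconj I(3) by blast
    then have "q dvd card (fixed_zero_sum_functions ?K q I)"
      using K.dvd_card_fixed_zero_sum_functions[OF finK prime_gt_0_nat[OF q]]
        subgroup_incl[OF I(1) K(1) I(2)] by simp
    then show ?thesis
      using phi_c[OF I(2)] by (simp flip: of_nat_mod)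
  qed
  then have "c \<in> p_ideal G H q K"
    using K(1) c unfolding p_ideal_def by auto
  moreover have "phi K q c = 1"
    using phi_c[of K] K.fixed_zero_sum_functions_carrier[OF q] K(2) prime_gt_1_nat[OF q]
    by simp
  then have "c \<notin> p_ideal G K q K"
    using K(1) subconj_refl[OF K_sub] unfolding p_ideal_def by auto
  ultimately show ?thesis by blast
qed

lemma p_ideal_eq_imp_conjugate:
  assumes "finite (carrier G)" "prime q" "subgroup H G" "subgroup K G"
    and "\<not> q dvd card H" "\<not> q dvd card K" and "p_ideal G H q = p_ideal G K q"
  shows "conjugate G H K"
proof (rule ccontr)
  assume "\<not> conjugate G H K"
  then have "\<not> subconj G K H \<or> \<not> subconj G H K"
    using subconj_antisym[OF assms(1)] assms(3,4) subgroup.subset by blast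
  then show False
    using p_ideal_neq_if_not_subconj[OF assms(1,2)] assms(3-7) by metis
qed

end

theorem corollary4p17:
  fixes G :: "('a, 'b) monoid_scheme" and p :: nat
  assumes "group G" and "finite (carrier G)" and "prime p"
    and "\<exists>n. card (carrier G) = p ^ n"
  shows "(\<forall>H K. subgroup H G \<longrightarrow> subgroup K G \<longrightarrow> p_ideal G H p = p_ideal G K p) \<and>
         (\<forall>q H K. prime q \<longrightarrow> q \<noteq> p \<longrightarrow> subgroup H G \<longrightarrow> subgroup K G \<longrightarrow>
            (p_ideal G H q = p_ideal G K q \<longleftrightarrow> conjugate G H K))"
proof -
  interpret group G by (rule assms(1))
  obtain n where n: "card (carrier G) = p ^ n" using assms(4) by blast
  have coprime_order: "\<not> q dvd card I" if q: "prime q" "q \<noteq> p" and I: "subgroup I G" for q I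
  proof
    obtain k where "card I = p ^ k"
      using card_subgroup_prime_power[OF assms(3) n I] by blast
    moreover assume "q dvd card I"
    ultimately show False
      using q assms(3) by (metis prime_dvd_power primes_dvd_imp_eq)
  qed
  have "p_ideal G H p = p_ideal G K p" if "subgroup H G" "subgroup K G" for H K
    using that by (simp add: fun_eq_iff p_ideal_prime_power_order[OF assms(3) n])
  moreover have "p_ideal G H q = p_ideal G K q \<longleftrightarrow> conjugate G H K"
    if q: "prime q" "q \<noteq> p" and H: "subgroup H G" and K: "subgroup K G" for q H K
    using p_ideal_eq_imp_conjugate[OF assms(2) q(1) H K coprime_order[OF q H] coprime_order[OF q K]]
      p_ideal_conjugate_eq[OF subgroup.subset[OF H]] by blast
  ultimately show ?thesis by blast
qed

end
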